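(* Let $G$ be a group with the unique root property which is generated by the union of two subgroups $A$ and $B$, let $H$ be a finite-index subgroup of $G$, and let $\varphi:H\to H$ be an automorphism. If $\varphi\neq\mathrm{id}$ but $\varphi|_{H\cap A}=\mathrm{id}$ and $\varphi|_{H\cap B}=\mathrm{id}$, then $\varphi$ does not extend to an automorphism of $G$.
   Context: A group $G$ has the unique root property if for all $x,y\in G$ and every positive integer $n$, $x^n=y^n$ implies $x=y$. *)

theory Defs
  imports "HOL-Algebra.Algebra"
begin

definition unique_root_property :: "('a, 'b) monoid_scheme \<Rightarrow> bool" where
  "unique_root_property G \<longleftrightarrow>
     (\<forall>x\<in>carrier G. \<forall>y\<in>carrier G. \<forall>n::nat. n > 0 \<longrightarrow>
        x [^]\<^bsub>G\<^esub> n = y [^]\<^bsub>G\<^esub> n \<longrightarrow> x = y)"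

end

theory Submission
  imports Defs
begin

text \<open>
  An automorphism \<open>\<psi>\<close> of \<open>G\<close> extending \<open>\<phi>\<close> fixes \<open>H \<inter> A\<close> and \<open>H \<inter> B\<close>. Since \<open>H\<close> has
  finite index, every \<open>a \<in> A\<close> has a positive power \<open>a\<^sup>n \<in> H \<inter> A\<close>, so
  \<open>\<psi>(a)\<^sup>n = \<psi>(a\<^sup>n) = a\<^sup>n\<close>, and unique roots give \<open>\<psi>(a) = a\<close>; likewise on \<open>B\<close>.
  The fixed points of \<open>\<psi>\<close> form a subgroup containing \<open>A \<union> B\<close>, hence all of \<open>G\<close>,
  so \<open>\<phi> = \<psi>|\<^sub>H\<close> is the identity.
\<close>

lemma unique_root_propertyD:
  assumes "unique_root_property G"
    and "x \<in> carrier G" "y \<in> carrier G" "n > 0" "x [^]\<^bsub>G\<^esub> (n::nat) = y [^]\<^bsub>G\<^esub> n"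
  shows "x = y"
  using assms unfolding unique_root_property_def by blast

lemma (in group) subgroup_nat_pow_closed:
  assumes "subgroup H G" "h \<in> H"
  shows "h [^] (n::nat) \<in> H"
  using subgroup_int_pow_closed[OF assms, of "int n"] by (simp add: int_pow_int)

lemma (in group) finite_index_pow_in_subgroup:
  assumes H: "subgroup H G" and fin: "finite (rcosets H)" and a: "a \<in> carrier G"
  shows "\<exists>n>0. a [^] (n::nat) \<in> H"
proof -
  define f where "f = (\<lambda>k::nat. H #> a [^] k)"
  have "range f \<subseteq> rcosets H"
    unfolding f_def using a subgroup.subset[OF H] by (auto intro!: rcosetsI)
  then have "\<not> inj f"
    using fin finite_subset finite_imageD infinite_UNIV_nat by blast
  then obtain i j where ij: "i < j" "f i = f j"
    unfolding inj_def by (metis linorder_neq_iff)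
  have "a [^] j \<in> H #> a [^] i"
    using ij(2) rcos_self[OF _ H, of "a [^] j"] a unfolding f_def by simp
  then have "a [^] j \<otimes> inv (a [^] i) \<in> H"
    using subgroup.rcos_module_imp[OF H is_group] a by simp
  moreover have "a [^] j = a [^] (j - i) \<otimes> a [^] i"
    using nat_pow_mult[OF a, of "j - i" i] ij(1) by simp
  ultimately have "a [^] (j - i) \<in> H"
    using a by (simp add: m_assoc)
  then show ?thesis
    using ij(1) by (intro exI[of _ "j - i"]) simp
qed

lemma (in group) fixed_points_subgroup:
  assumes "\<psi> \<in> hom G G"
  shows "subgroup {x \<in> carrier G. \<psi> x = x} G"
proof -
  interpret group_hom G G \<psi>
    using assms by unfold_locales
  show ?thesis
    by (rule subgroupI) (auto simp: hom_inv hom_mult)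
qed

lemma (in group) endomorphism_fixes_subgroup:
  assumes roots: "unique_root_property G"
    and H: "subgroup H G" "finite (rcosets H)"
    and \<psi>: "\<psi> \<in> hom G G"
    and C: "subgroup C G" and fix_HC: "\<forall>h\<in>H \<inter> C. \<psi> h = h"
    and a: "a \<in> C"
  shows "\<psi> a = a"
proof -
  interpret group_hom G G \<psi>
    using \<psi> by unfold_locales
  have a_carrier: "a \<in> carrier G"
    using subgroup.subset[OF C] a by blast
  obtain n :: nat where n: "n > 0" "a [^] n \<in> H"
    using finite_index_pow_in_subgroup[OF H a_carrier] by blast
  have "a [^] n \<in> H \<inter> C"
    using n(2) subgroup_nat_pow_closed[OF C a] by blast
  then have "\<psi> a [^] n = a [^] n"
    using fix_HC hom_nat_pow[OF a_carrier, of n] by (metis IntD1 IntD2 IntI)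
  then show ?thesis
    using unique_root_propertyD[OF roots] a_carrier n(1) by simp
qed

lemma (in group) endomorphism_fixing_generators_is_id:
  assumes \<psi>: "\<psi> \<in> hom G G"
    and gen: "generate G S = carrier G" "S \<subseteq> carrier G"
    and fix_S: "\<forall>s\<in>S. \<psi> s = s"
    and x: "x \<in> carrier G"
  shows "\<psi> x = x"
proof -
  have "generate G S \<subseteq> {x \<in> carrier G. \<psi> x = x}"
    using generate_subgroup_incl[OF _ fixed_points_subgroup[OF \<psi>]] gen(2) fix_S by blast
  then show ?thesis
    using gen(1) x by blast
qed

theorem lemma3p1:
  fixes G :: "('a, 'b) monoid_scheme"
    and A B H :: "'a set" and \<phi> :: "'a \<Rightarrow> 'a"
  assumes "group G"
    and "unique_root_property G"
    and "subgroup A G" and "subgroup B G"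
    and "generate G (A \<union> B) = carrier G"
    and "subgroup H G"
    and "finite (rcosets\<^bsub>G\<^esub> H)"
    and "\<phi> \<in> iso (subgroup_generated G H) (subgroup_generated G H)"
    and "\<exists>h\<in>H. \<phi> h \<noteq> h"
    and "\<forall>h\<in>H \<inter> A. \<phi> h = h"
    and "\<forall>h\<in>H \<inter> B. \<phi> h = h"
  shows "\<not> (\<exists>\<psi>\<in>iso G G. \<forall>h\<in>H. \<psi> h = \<phi> h)"
proof
  assume "\<exists>\<psi>\<in>iso G G. \<forall>h\<in>H. \<psi> h = \<phi> h"
  then obtain \<psi> where \<psi>: "\<psi> \<in> hom G G" and extends: "\<forall>h\<in>H. \<psi> h = \<phi> h"
    by (auto simp: iso_def)
  interpret group G by fact
  have "\<psi> a = a" if "a \<in> A \<union> B" for a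
    using that endomorphism_fixes_subgroup[OF assms(2,6,7) \<psi>] assms(3,4,10,11) extends
    by auto
  moreover have "A \<union> B \<subseteq> carrier G"
    using assms(3,4) subgroup.subset by blast
  ultimately have "\<psi> h = h" if "h \<in> H" for h
    using endomorphism_fixing_generators_is_id[OF \<psi> assms(5)] that subgroup.subset[OF assms(6)]
    by blast
  then show False
    using assms(9) extends by auto
qed

end
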